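(* Let $H\ge 1$ and $m\ge 1$ be integers and let $V_0\in\mathbb{R}^{|\mathcal S|}$ be arbitrary. Consider the iteration (generalized policy iteration with lookahead): for $k=0,1,2,\dots$, let $(\mu_{k+1},\nu_{k+1})$ be an $H$-step lookahead policy pair for $V_k$, i.e. a pair of stationary randomized policies satisfying $T_{\mu_{k+1},\nu_{k+1}}(T^{H-1}V_k)=T^{H}V_k$, and set $$V_{k+1}=T_{\mu_{k+1},\nu_{k+1}}^{m}\,T^{H-1}V_k .$$ Then for every $k\ge 0$, $$\|V_k-J^*\|_\infty\le\Big(\alpha^{H-1}+(1+\alpha^m)\frac{\alpha^{H-1}}{1-\alpha}(1+\alpha)\Big)^k\|V_0-J^*\|_\infty .$$ In particular, if $H$ and $m$ satisfy $\alpha^{H-1}+2(1+\alpha^m)\frac{\alpha^{H-1}}{1-\alpha}<1$, then $V_k\to J^*$ exponentially fast.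
   Context: A two-player zero-sum discounted Markov game has a finite state space $\mathcal S$, finite action sets $\mathcal U(s)$ (maximizer) and $\mathcal V(s)$ (minimizer) at each state $s$, transition probabilities $P(s'|s,u,v)$, reward $g(s,u,v)\in[0,1]$, and discount factor $\alpha\in(0,1)$. A (stationary randomized) policy pair $(\mu,\nu)$ assigns to each $s$ distributions $\mu(s)\in\Delta(\mathcal U(s))$, $\nu(s)\in\Delta(\mathcal V(s))$. For $V\in\mathbb{R}^{|\mathcal S|}$ and $s\in\mathcal S$ let $A_{V,s}\in\mathbb{R}^{|\mathcal U(s)|\times|\mathcal V(s)|}$ be $A_{V,s}(u,v)=g(s,u,v)+\alpha\sum_{s'}P(s'|s,u,v)V(s')$. Define $T_{\mu,\nu}V(s)=\mu(s)^\top A_{V,s}\nu(s)$ and the Bellman operator $TV(s)=\max_{p\in\Delta(\mathcal U(s))}\min_{q\in\Delta(\mathcal V(s))}p^\top A_{V,s}q$. $J^{\mu,\nu}$ denotes the unique fixed point of $T_{\mu,\nu}$ (the expected discounted reward of $(\mu,\nu)$), and $J^*$ denotes the unique fixed point of $T$ (the Nash equilibrium value of the game). $T^j$ and $T_{\mu,\nu}^j$ denote $j$-fold compositions, $T^0$ is the identity. *)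

theory Defs
  imports "HOL-Analysis.Analysis"
begin

definition is_distr :: "'a set \<Rightarrow> ('a \<Rightarrow> real) \<Rightarrow> bool" where
  "is_distr A p \<longleftrightarrow> (\<forall>a. 0 \<le> p a) \<and> (\<forall>a. a \<notin> A \<longrightarrow> p a = 0) \<and> sum p A = 1"

definition Amat :: "('s \<Rightarrow> 'u \<Rightarrow> 'v \<Rightarrow> real) \<Rightarrow> ('s \<Rightarrow> 'u \<Rightarrow> 'v \<Rightarrow> 's \<Rightarrow> real) \<Rightarrow> real
    \<Rightarrow> ('s::finite \<Rightarrow> real) \<Rightarrow> 's \<Rightarrow> 'u \<Rightarrow> 'v \<Rightarrow> real" where
  "Amat g P \<alpha> V s u v = g s u v + \<alpha> * (\<Sum>s'\<in>UNIV. P s u v s' * V s')"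

definition bil :: "'u set \<Rightarrow> 'v set \<Rightarrow> ('u \<Rightarrow> real) \<Rightarrow> ('u \<Rightarrow> 'v \<Rightarrow> real) \<Rightarrow> ('v \<Rightarrow> real) \<Rightarrow> real" where
  "bil U W p A q = (\<Sum>u\<in>U. \<Sum>v\<in>W. p u * A u v * q v)"

definition Tpol :: "('s \<Rightarrow> 'u set) \<Rightarrow> ('s \<Rightarrow> 'v set) \<Rightarrow> ('s \<Rightarrow> 'u \<Rightarrow> 'v \<Rightarrow> real)
    \<Rightarrow> ('s \<Rightarrow> 'u \<Rightarrow> 'v \<Rightarrow> 's \<Rightarrow> real) \<Rightarrow> real
    \<Rightarrow> ('s \<Rightarrow> 'u \<Rightarrow> real) \<Rightarrow> ('s \<Rightarrow> 'v \<Rightarrow> real) \<Rightarrow> ('s::finite \<Rightarrow> real) \<Rightarrow> 's \<Rightarrow> real" where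
  "Tpol U W g P \<alpha> \<mu> \<nu> V s = bil (U s) (W s) (\<mu> s) (Amat g P \<alpha> V s) (\<nu> s)"

text \<open>Bellman (Shapley) operator: max over p, min over q (attained by compactness,
  written with Sup/Inf).\<close>
definition Tbell :: "('s \<Rightarrow> 'u set) \<Rightarrow> ('s \<Rightarrow> 'v set) \<Rightarrow> ('s \<Rightarrow> 'u \<Rightarrow> 'v \<Rightarrow> real)
    \<Rightarrow> ('s \<Rightarrow> 'u \<Rightarrow> 'v \<Rightarrow> 's \<Rightarrow> real) \<Rightarrow> real \<Rightarrow> ('s::finite \<Rightarrow> real) \<Rightarrow> 's \<Rightarrow> real" where
  "Tbell U W g P \<alpha> V s =
     (SUP p\<in>{p. is_distr (U s) p}. INF q\<in>{q. is_distr (W s) q}.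
        bil (U s) (W s) p (Amat g P \<alpha> V s) q)"

definition supnorm :: "('s::finite \<Rightarrow> real) \<Rightarrow> real" where
  "supnorm f = Max (range (\<lambda>s. \<bar>f s\<bar>))"

end

theory Submission
  imports Defs
begin

text \<open>Both the Shapley operator T and every policy operator are \<alpha>-contractions in the sup
  norm, and J* is a fixed point of T. Writing e = \<parallel>V - J*\<parallel> and W = T^(H-1) V, we get
  \<parallel>W - J*\<parallel> \<le> \<alpha>^(H-1) e and \<parallel>T W - W\<parallel> \<le> (\<alpha>^H + \<alpha>^(H-1)) e. The lookahead condition says
  that the policy operator agrees with T at W, so the geometric series bound for iterates of a
  contraction gives \<parallel>T_\<mu>\<nu>^m W - W\<parallel> \<le> \<parallel>T W - W\<parallel> / (1 - \<alpha>). Hence each step shrinks the error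
  by the factor \<alpha>^(H-1) + \<alpha>^(H-1) (1 + \<alpha>) / (1 - \<alpha>), which is at most the claimed rate.\<close>

lemma abs_le_supnorm: "\<bar>f s\<bar> \<le> supnorm (f :: 's::finite \<Rightarrow> real)"
  unfolding supnorm_def by (rule Max_ge) auto

lemma supnorm_leI: "(\<And>s. \<bar>f s\<bar> \<le> c) \<Longrightarrow> supnorm (f :: 's::finite \<Rightarrow> real) \<le> c"
  unfolding supnorm_def by (subst Max_le_iff) auto

lemma supnorm_nonneg: "0 \<le> supnorm (f :: 's::finite \<Rightarrow> real)"
  using abs_le_supnorm[of f undefined] by linarith

lemma supnorm_diff_commute:
  "supnorm (\<lambda>s. f s - h s) = supnorm (\<lambda>s. h s - f s :: real)"
  unfolding supnorm_def by (simp add: abs_minus_commute)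

lemma supnorm_diff_triangle:
  fixes f g h :: "'s::finite \<Rightarrow> real"
  shows "supnorm (\<lambda>s. f s - h s) \<le> supnorm (\<lambda>s. f s - g s) + supnorm (\<lambda>s. g s - h s)"
proof (rule supnorm_leI)
  fix s
  show "\<bar>f s - h s\<bar> \<le> supnorm (\<lambda>s. f s - g s) + supnorm (\<lambda>s. g s - h s)"
    using abs_le_supnorm[of "\<lambda>s. f s - g s" s] abs_le_supnorm[of "\<lambda>s. g s - h s" s] by linarith
qed

definition sup_contraction :: "real \<Rightarrow> (('s::finite \<Rightarrow> real) \<Rightarrow> 's \<Rightarrow> real) \<Rightarrow> bool" where
  "sup_contraction \<alpha> F \<longleftrightarrow>
     (\<forall>V V'. supnorm (\<lambda>s. F V s - F V' s) \<le> \<alpha> * supnorm (\<lambda>s. V s - V' s))"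

lemma sup_contractionI_one_sided:
  assumes "\<And>V V' s. F V s \<le> F V' s + \<alpha> * supnorm (\<lambda>x. V x - V' x)"
  shows "sup_contraction \<alpha> F"
  unfolding sup_contraction_def
proof (intro allI supnorm_leI)
  fix V V' s
  show "\<bar>F V s - F V' s\<bar> \<le> \<alpha> * supnorm (\<lambda>x. V x - V' x)"
    using assms[of V s V'] assms[of V' s V] supnorm_diff_commute[of V' V]
    by (simp add: abs_le_iff)
qed

lemma sup_contraction_iterate_fixpoint:
  assumes F: "sup_contraction \<alpha> F" and "0 \<le> \<alpha>" and J_fix: "F J = J"
  shows "supnorm (\<lambda>s. (F ^^ j) X s - J s) \<le> \<alpha> ^ j * supnorm (\<lambda>s. X s - J s)"
proof (induction j)
  case (Suc j)
  have "supnorm (\<lambda>s. (F ^^ Suc j) X s - J s) = supnorm (\<lambda>s. F ((F ^^ j) X) s - F J s)"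
    by (simp add: J_fix)
  also have "\<dots> \<le> \<alpha> * supnorm (\<lambda>s. (F ^^ j) X s - J s)"
    using F unfolding sup_contraction_def by blast
  also have "\<dots> \<le> \<alpha> * (\<alpha> ^ j * supnorm (\<lambda>s. X s - J s))"
    using Suc \<open>0 \<le> \<alpha>\<close> by (rule mult_left_mono)
  finally show ?case by (simp add: mult.assoc)
qed simp

lemma sup_contraction_iterate_displacement:
  assumes F: "sup_contraction \<alpha> F" and "0 \<le> \<alpha>" "\<alpha> < 1"
  shows "supnorm (\<lambda>s. (F ^^ j) W s - W s) \<le> supnorm (\<lambda>s. F W s - W s) / (1 - \<alpha>)"
proof (induction j)
  case 0
  have "supnorm (\<lambda>s. W s - W s) = 0" by (simp add: supnorm_def)
  then show ?case using \<open>\<alpha> < 1\<close> by (simp add: supnorm_nonneg)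
next
  case (Suc j)
  let ?c = "supnorm (\<lambda>s. F W s - W s)"
  have "supnorm (\<lambda>s. (F ^^ Suc j) W s - W s)
      \<le> supnorm (\<lambda>s. F ((F ^^ j) W) s - F W s) + ?c"
    using supnorm_diff_triangle[of "F ((F ^^ j) W)" W "F W"] by simp
  also have "\<dots> \<le> \<alpha> * supnorm (\<lambda>s. (F ^^ j) W s - W s) + ?c"
    using F unfolding sup_contraction_def by (metis add_right_mono)
  also have "\<dots> \<le> \<alpha> * (?c / (1 - \<alpha>)) + ?c"
    using mult_left_mono[OF Suc \<open>0 \<le> \<alpha>\<close>] by simp
  also have "\<dots> = ?c / (1 - \<alpha>)"
    using \<open>\<alpha> < 1\<close> by (simp add: field_simps)
  finally show ?case .
qed

lemma geometric_decay:
  fixes e :: "nat \<Rightarrow> real"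
  assumes "0 \<le> \<rho>" and "\<And>k. e (Suc k) \<le> \<rho> * e k"
  shows "e k \<le> \<rho> ^ k * e 0"
proof (induction k)
  case (Suc k)
  have "e (Suc k) \<le> \<rho> * e k" by (rule assms(2))
  also have "\<dots> \<le> \<rho> * (\<rho> ^ k * e 0)" using Suc \<open>0 \<le> \<rho>\<close> by (rule mult_left_mono)
  finally show ?case by (simp add: mult.assoc)
qed simp

lemma lookahead_error_step:
  fixes T Tp :: "('s::finite \<Rightarrow> real) \<Rightarrow> 's \<Rightarrow> real"
  assumes T: "sup_contraction \<alpha> T" and Tp: "sup_contraction \<alpha> Tp"
    and \<alpha>: "0 \<le> \<alpha>" "\<alpha> < 1" and "1 \<le> H"
    and J_fix: "T J = J"
    and lookahead: "Tp ((T ^^ (H - 1)) V) = (T ^^ H) V"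
  shows "supnorm (\<lambda>s. (Tp ^^ m) ((T ^^ (H - 1)) V) s - J s)
      \<le> (\<alpha> ^ (H - 1) + \<alpha> ^ (H - 1) * (1 + \<alpha>) / (1 - \<alpha>)) * supnorm (\<lambda>s. V s - J s)"
proof -
  define e where "e = supnorm (\<lambda>s. V s - J s)"
  define W where "W = (T ^^ (H - 1)) V"
  have TW: "T W = (T ^^ H) V"
    unfolding W_def using \<open>1 \<le> H\<close> by (cases H) auto
  have W_err: "supnorm (\<lambda>s. W s - J s) \<le> \<alpha> ^ (H - 1) * e"
    unfolding W_def e_def using T \<alpha>(1) J_fix by (rule sup_contraction_iterate_fixpoint)
  have TW_err: "supnorm (\<lambda>s. T W s - J s) \<le> \<alpha> * (\<alpha> ^ (H - 1) * e)"
    using \<open>1 \<le> H\<close> sup_contraction_iterate_fixpoint[OF T \<alpha>(1) J_fix, of H V]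
    unfolding TW e_def by (cases H) auto
  have "Tp W = T W" using lookahead TW unfolding W_def by simp
  then have "supnorm (\<lambda>s. Tp W s - W s) \<le> supnorm (\<lambda>s. T W s - J s) + supnorm (\<lambda>s. J s - W s)"
    using supnorm_diff_triangle[of "T W" W J] by simp
  also have "\<dots> \<le> \<alpha> ^ (H - 1) * (1 + \<alpha>) * e"
    using TW_err W_err supnorm_diff_commute[of J W] by (simp add: algebra_simps)
  finally have "supnorm (\<lambda>s. Tp W s - W s) / (1 - \<alpha>) \<le> \<alpha> ^ (H - 1) * (1 + \<alpha>) * e / (1 - \<alpha>)"
    using \<alpha> by (simp add: divide_right_mono)
  with sup_contraction_iterate_displacement[OF Tp \<alpha>, of m W]
  have displacement: "supnorm (\<lambda>s. (Tp ^^ m) W s - W s) \<le> \<alpha> ^ (H - 1) * (1 + \<alpha>) * e / (1 - \<alpha>)"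
    by linarith
  have "supnorm (\<lambda>s. (Tp ^^ m) W s - J s)
      \<le> supnorm (\<lambda>s. (Tp ^^ m) W s - W s) + supnorm (\<lambda>s. W s - J s)"
    by (rule supnorm_diff_triangle)
  also have "\<dots> \<le> (\<alpha> ^ (H - 1) + \<alpha> ^ (H - 1) * (1 + \<alpha>) / (1 - \<alpha>)) * e"
    using displacement W_err by (simp add: algebra_simps)
  finally show ?thesis unfolding W_def e_def .
qed

lemma is_distr_exists: "finite A \<Longrightarrow> A \<noteq> {} \<Longrightarrow> \<exists>p. is_distr A p"
  by (rule exI[of _ "\<lambda>a. if a \<in> A then 1 / card A else 0"])
     (auto simp: is_distr_def card_gt_0_iff)

lemma bil_le_shift:
  assumes "is_distr U p" "is_distr W q"
    and le: "\<And>u v. u \<in> U \<Longrightarrow> v \<in> W \<Longrightarrow> A u v \<le> B u v + c"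
  shows "bil U W p A q \<le> bil U W p B q + c"
proof -
  have p: "\<And>u. 0 \<le> p u" "sum p U = 1" and q: "\<And>v. 0 \<le> q v" "sum q W = 1"
    using assms(1,2) unfolding is_distr_def by auto
  have "bil U W p A q \<le> (\<Sum>u\<in>U. \<Sum>v\<in>W. p u * (B u v + c) * q v)"
    unfolding bil_def by (intro sum_mono mult_right_mono mult_left_mono le p q)
  also have "\<dots> = bil U W p B q + (\<Sum>u\<in>U. p u * c * (\<Sum>v\<in>W. q v))"
    by (simp add: bil_def algebra_simps sum.distrib sum_distrib_left)
  also have "\<dots> = bil U W p B q + c"
    by (simp add: q p flip: sum_distrib_right)
  finally show ?thesis .
qed

lemma abs_bil_le:
  assumes "finite U" "finite W" "is_distr U p" "is_distr W q"
  shows "\<bar>bil U W p A q\<bar> \<le> (\<Sum>u\<in>U. \<Sum>v\<in>W. \<bar>A u v\<bar>)"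
proof -
  let ?M = "\<Sum>u\<in>U. \<Sum>v\<in>W. \<bar>A u v\<bar>"
  have entry: "\<bar>A u v\<bar> \<le> ?M" if "u \<in> U" "v \<in> W" for u v
  proof -
    have "\<bar>A u v\<bar> \<le> (\<Sum>v\<in>W. \<bar>A u v\<bar>)"
      using that assms by (intro member_le_sum) auto
    also have "\<dots> \<le> ?M"
      using that assms by (intro member_le_sum[where f="\<lambda>u. \<Sum>v\<in>W. \<bar>A u v\<bar>"]) (auto intro: sum_nonneg)
    finally show ?thesis .
  qed
  have "bil U W p A q \<le> bil U W p (\<lambda>_ _. 0) q + ?M"
    using assms(3,4) by (rule bil_le_shift) (use entry in \<open>auto simp: abs_le_iff\<close>)
  moreover have "bil U W p (\<lambda>_ _. 0) q \<le> bil U W p A q + ?M"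
    using assms(3,4) by (rule bil_le_shift) (use entry in \<open>force simp: abs_le_iff\<close>)
  ultimately show ?thesis by (simp add: bil_def abs_le_iff)
qed

lemma SUP_INF_le_shift:
  fixes F G :: "'p \<Rightarrow> 'q \<Rightarrow> real"
  assumes "Ps \<noteq> {}" "Qs \<noteq> {}"
    and le: "\<And>p q. p \<in> Ps \<Longrightarrow> q \<in> Qs \<Longrightarrow> F p q \<le> G p q + c"
    and bF: "\<And>p q. p \<in> Ps \<Longrightarrow> q \<in> Qs \<Longrightarrow> \<bar>F p q\<bar> \<le> M"
    and bG: "\<And>p q. p \<in> Ps \<Longrightarrow> q \<in> Qs \<Longrightarrow> \<bar>G p q\<bar> \<le> M"
  shows "(SUP p\<in>Ps. INF q\<in>Qs. F p q) \<le> (SUP p\<in>Ps. INF q\<in>Qs. G p q) + c"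
proof -
  obtain q0 where q0: "q0 \<in> Qs" using assms(2) by blast
  have bdd_F: "bdd_below (F p ` Qs)" if "p \<in> Ps" for p
    using bF that by (intro bdd_belowI2[where m="-M"]) (fastforce simp: abs_le_iff)
  have bdd_G: "bdd_below (G p ` Qs)" if "p \<in> Ps" for p
    using bG that by (intro bdd_belowI2[where m="-M"]) (fastforce simp: abs_le_iff)
  have "(INF q\<in>Qs. G p q) \<le> M" if "p \<in> Ps" for p
    using cINF_lower[OF bdd_G[OF that] q0] bG[OF that q0] by linarith
  hence bdd_SUP: "bdd_above ((\<lambda>p. INF q\<in>Qs. G p q) ` Ps)"
    by (intro bdd_aboveI2[where M=M]) auto
  have INF_shift: "(INF q\<in>Qs. F p q) - c \<le> (INF q\<in>Qs. G p q)" if p: "p \<in> Ps" for p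
  proof (rule cINF_greatest[OF assms(2)])
    fix q assume "q \<in> Qs"
    thus "(INF q\<in>Qs. F p q) - c \<le> G p q"
      using cINF_lower[OF bdd_F[OF p] \<open>q \<in> Qs\<close>] le[OF p \<open>q \<in> Qs\<close>] by linarith
  qed
  show ?thesis
  proof (rule cSUP_least[OF assms(1)])
    fix p assume p: "p \<in> Ps"
    show "(INF q\<in>Qs. F p q) \<le> (SUP p\<in>Ps. INF q\<in>Qs. G p q) + c"
      using INF_shift[OF p] cSUP_upper[OF p bdd_SUP] by linarith
  qed
qed

lemma Amat_le_shift:
  assumes "0 \<le> \<alpha>" and P_nonneg: "\<And>s'. 0 \<le> P s u v s'" and P_sum: "(\<Sum>s'\<in>UNIV. P s u v s') = 1"
  shows "Amat g P \<alpha> V s u v \<le> Amat g P \<alpha> V' s u v + \<alpha> * supnorm (\<lambda>x. V x - V' x)"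
proof -
  let ?n = "supnorm (\<lambda>x. V x - V' x)"
  have "(\<Sum>s'\<in>UNIV. P s u v s' * V s') \<le> (\<Sum>s'\<in>UNIV. P s u v s' * (V' s' + ?n))"
  proof (intro sum_mono mult_left_mono P_nonneg)
    fix s' show "V s' \<le> V' s' + ?n"
      using abs_le_supnorm[of "\<lambda>x. V x - V' x" s'] by linarith
  qed
  also have "\<dots> = (\<Sum>s'\<in>UNIV. P s u v s' * V' s') + ?n"
    using P_sum by (simp add: distrib_left sum.distrib flip: sum_distrib_right)
  finally have "\<alpha> * (\<Sum>s'\<in>UNIV. P s u v s' * V s') \<le> \<alpha> * ((\<Sum>s'\<in>UNIV. P s u v s' * V' s') + ?n)"
    using \<open>0 \<le> \<alpha>\<close> by (rule mult_left_mono)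
  then show ?thesis unfolding Amat_def by (simp add: distrib_left)
qed

locale finite_markov_game =
  fixes U :: "'s::finite \<Rightarrow> 'u set" and W :: "'s \<Rightarrow> 'v set"
    and g :: "'s \<Rightarrow> 'u \<Rightarrow> 'v \<Rightarrow> real" and P :: "'s \<Rightarrow> 'u \<Rightarrow> 'v \<Rightarrow> 's \<Rightarrow> real"
    and \<alpha> :: real
  assumes U_fin: "\<And>s. finite (U s) \<and> U s \<noteq> {}"
    and W_fin: "\<And>s. finite (W s) \<and> W s \<noteq> {}"
    and P_nonneg: "\<And>s u v s'. u \<in> U s \<Longrightarrow> v \<in> W s \<Longrightarrow> 0 \<le> P s u v s'"
    and P_sum: "\<And>s u v. u \<in> U s \<Longrightarrow> v \<in> W s \<Longrightarrow> (\<Sum>s'\<in>UNIV. P s u v s') = 1"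
    and alpha_nonneg: "0 \<le> \<alpha>"
begin

lemma Amat_le_shift_on_actions:
  "u \<in> U s \<Longrightarrow> v \<in> W s \<Longrightarrow>
    Amat g P \<alpha> V s u v \<le> Amat g P \<alpha> V' s u v + \<alpha> * supnorm (\<lambda>x. V x - V' x)"
  using alpha_nonneg P_nonneg P_sum by (rule Amat_le_shift)

lemma Tpol_contraction:
  assumes "\<And>s. is_distr (U s) (\<mu> s) \<and> is_distr (W s) (\<nu> s)"
  shows "sup_contraction \<alpha> (Tpol U W g P \<alpha> \<mu> \<nu>)"
  unfolding Tpol_def using assms Amat_le_shift_on_actions
  by (intro sup_contractionI_one_sided bil_le_shift) auto

lemma Tbell_contraction: "sup_contraction \<alpha> (Tbell U W g P \<alpha>)"
proof (rule sup_contractionI_one_sided)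
  fix V V' s
  let ?A = "Amat g P \<alpha> V s" and ?B = "Amat g P \<alpha> V' s"
  let ?M = "(\<Sum>u\<in>U s. \<Sum>v\<in>W s. \<bar>?A u v\<bar>) + (\<Sum>u\<in>U s. \<Sum>v\<in>W s. \<bar>?B u v\<bar>)"
  have abs_sum_nonneg: "0 \<le> (\<Sum>u\<in>U s. \<Sum>v\<in>W s. \<bar>C u v\<bar>)" for C :: "'u \<Rightarrow> 'v \<Rightarrow> real"
    by (intro sum_nonneg) auto
  show "Tbell U W g P \<alpha> V s \<le> Tbell U W g P \<alpha> V' s + \<alpha> * supnorm (\<lambda>x. V x - V' x)"
    unfolding Tbell_def
  proof (rule SUP_INF_le_shift)
    show "{p. is_distr (U s) p} \<noteq> {}" using is_distr_exists[of "U s"] U_fin[of s] by auto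
    show "{q. is_distr (W s) q} \<noteq> {}" using is_distr_exists[of "W s"] W_fin[of s] by auto
    fix p q assume pq: "p \<in> {p. is_distr (U s) p}" "q \<in> {q. is_distr (W s) q}"
    show "bil (U s) (W s) p ?A q \<le> bil (U s) (W s) p ?B q + \<alpha> * supnorm (\<lambda>x. V x - V' x)"
      using pq Amat_le_shift_on_actions by (intro bil_le_shift) auto
    show "\<bar>bil (U s) (W s) p ?A q\<bar> \<le> ?M"
      using abs_bil_le[of "U s" "W s" p q ?A] pq U_fin W_fin abs_sum_nonneg[of ?B] by auto
    show "\<bar>bil (U s) (W s) p ?B q\<bar> \<le> ?M"
      using abs_bil_le[of "U s" "W s" p q ?B] pq U_fin W_fin abs_sum_nonneg[of ?A] by auto
  qed
qed

end

theorem theorem1: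
  fixes U :: "'s::finite \<Rightarrow> 'u set" and W :: "'s \<Rightarrow> 'v set"
    and g :: "'s \<Rightarrow> 'u \<Rightarrow> 'v \<Rightarrow> real" and P :: "'s \<Rightarrow> 'u \<Rightarrow> 'v \<Rightarrow> 's \<Rightarrow> real"
    and \<alpha> :: real and H m :: nat
    and Jstar :: "'s \<Rightarrow> real"
    and V :: "nat \<Rightarrow> 's \<Rightarrow> real"
    and \<mu> :: "nat \<Rightarrow> 's \<Rightarrow> 'u \<Rightarrow> real" and \<nu> :: "nat \<Rightarrow> 's \<Rightarrow> 'v \<Rightarrow> real"
  assumes U_fin: "\<And>s. finite (U s) \<and> U s \<noteq> {}"
    and W_fin: "\<And>s. finite (W s) \<and> W s \<noteq> {}"
    and P_nonneg: "\<And>s u v s'. u \<in> U s \<Longrightarrow> v \<in> W s \<Longrightarrow> 0 \<le> P s u v s'"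
    and P_sum: "\<And>s u v. u \<in> U s \<Longrightarrow> v \<in> W s \<Longrightarrow> (\<Sum>s'\<in>UNIV. P s u v s') = 1"
    and g_range: "\<And>s u v. u \<in> U s \<Longrightarrow> v \<in> W s \<Longrightarrow> 0 \<le> g s u v \<and> g s u v \<le> 1"
    and alpha: "0 < \<alpha>" "\<alpha> < 1"
    and H: "1 \<le> H" and m: "1 \<le> m"
    and Jstar_fix: "Tbell U W g P \<alpha> Jstar = Jstar"
    and pol: "\<And>k s. is_distr (U s) (\<mu> (Suc k) s) \<and> is_distr (W s) (\<nu> (Suc k) s)"
    and lookahead: "\<And>k. Tpol U W g P \<alpha> (\<mu> (Suc k)) (\<nu> (Suc k))
                           (((Tbell U W g P \<alpha>) ^^ (H - 1)) (V k))
                         = ((Tbell U W g P \<alpha>) ^^ H) (V k)"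
    and iter: "\<And>k. V (Suc k) = ((Tpol U W g P \<alpha> (\<mu> (Suc k)) (\<nu> (Suc k))) ^^ m)
                                 (((Tbell U W g P \<alpha>) ^^ (H - 1)) (V k))"
  shows "(\<forall>k. supnorm (\<lambda>s. V k s - Jstar s)
            \<le> (\<alpha> ^ (H - 1) + (1 + \<alpha> ^ m) * (\<alpha> ^ (H - 1) / (1 - \<alpha>)) * (1 + \<alpha>)) ^ k
               * supnorm (\<lambda>s. V 0 s - Jstar s))
       \<and> (\<alpha> ^ (H - 1) + 2 * (1 + \<alpha> ^ m) * (\<alpha> ^ (H - 1) / (1 - \<alpha>)) < 1 \<longrightarrow>
           (\<exists>\<rho>. 0 \<le> \<rho> \<and> \<rho> < 1 \<and>
              (\<forall>k. supnorm (\<lambda>s. V k s - Jstar s) \<le> \<rho> ^ k * supnorm (\<lambda>s. V 0 s - Jstar s))))"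
proof -
  interpret finite_markov_game U W g P \<alpha>
    using U_fin W_fin P_nonneg P_sum alpha by unfold_locales auto
  define \<rho> where "\<rho> = \<alpha> ^ (H - 1) + (1 + \<alpha> ^ m) * (\<alpha> ^ (H - 1) / (1 - \<alpha>)) * (1 + \<alpha>)"
  have rho_nonneg: "0 \<le> \<rho>"
    unfolding \<rho>_def using alpha by simp
  have "\<alpha> ^ (H - 1) * (1 + \<alpha>) / (1 - \<alpha>) \<le> (1 + \<alpha> ^ m) * (\<alpha> ^ (H - 1) * (1 + \<alpha>) / (1 - \<alpha>))"
    using mult_right_mono[of 1 "1 + \<alpha> ^ m" "\<alpha> ^ (H - 1) * (1 + \<alpha>) / (1 - \<alpha>)"] alpha by simp
  then have rate_le: "\<alpha> ^ (H - 1) + \<alpha> ^ (H - 1) * (1 + \<alpha>) / (1 - \<alpha>) \<le> \<rho>"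
    unfolding \<rho>_def by simp
  have step: "supnorm (\<lambda>s. V (Suc k) s - Jstar s) \<le> \<rho> * supnorm (\<lambda>s. V k s - Jstar s)" for k
  proof -
    have "supnorm (\<lambda>s. V (Suc k) s - Jstar s)
        \<le> (\<alpha> ^ (H - 1) + \<alpha> ^ (H - 1) * (1 + \<alpha>) / (1 - \<alpha>)) * supnorm (\<lambda>s. V k s - Jstar s)"
      unfolding iter[of k]
      using Tbell_contraction Tpol_contraction[OF pol] alpha_nonneg alpha(2) H Jstar_fix lookahead[of k]
      by (rule lookahead_error_step)
    also have "\<dots> \<le> \<rho> * supnorm (\<lambda>s. V k s - Jstar s)"
      using rate_le supnorm_nonneg by (rule mult_right_mono)
    finally show ?thesis .
  qed
  have "(1 + \<alpha> ^ m) * (\<alpha> ^ (H - 1) / (1 - \<alpha>)) * (1 + \<alpha>) \<le> (1 + \<alpha> ^ m) * (\<alpha> ^ (H - 1) / (1 - \<alpha>)) * 2"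
    using alpha by (intro mult_left_mono) auto
  then have "\<rho> \<le> \<alpha> ^ (H - 1) + 2 * (1 + \<alpha> ^ m) * (\<alpha> ^ (H - 1) / (1 - \<alpha>))"
    unfolding \<rho>_def by linarith
  then show ?thesis
    using geometric_decay[where e="\<lambda>k. supnorm (\<lambda>s. V k s - Jstar s)", OF rho_nonneg step] rho_nonneg
    unfolding \<rho>_def by auto
qed

end
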